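(* Let $P$ be a labeled protein tree on a protein set $\mathcal{P}$ (with respect to a gene tree $G$ and map $g:\mathcal{P}\to\mathcal{G}$), let $\mathbb{P}$ be the set of all inclusion-wise maximum creation-free protein subtrees of $P$, and let $\mathbb{P}_{span}$ be the span partition of $\mathcal{P}$ according to $\mathbb{P}$. If $P$ contains at least one node labeled $Creat$, then there exist two distinct sets $S_u,S_v\in\mathbb{P}_{span}$ such that $S_u$, $S_v$ and $S_u\cup S_v$ are each the leaf set of a complete subtree of $P$, and moreover: (1) $l_P(lca_P(S_u\cup S_v))=Creat$; (2) for every $t\in\{u,v\}$ and every $P_i\in span(S_t)$, $P|_{S_t}=P_i|_{S_t}$; (3) $span(S_u)\cap span(S_v)=\emptyset$; (4) $\{P_i|_{\mathcal{L}(P_i)-S_u} : P_i\in span(S_u)\} = \{P_i|_{\mathcal{L}(P_i)-S_v} : P_i\in span(S_v)\}$.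
   Context: Trees are rooted binary with leaves labeled bijectively by a finite set. $T[x]$ is the complete subtree of $T$ rooted at node $x$; a complete subtree is one of this form. $\mathcal{L}(T)$ is the leaf set, $x_l,x_r$ the children of an internal node $x$, $lca_T(L')$ the lowest common ancestor of $L'$. For $L'\subseteq\mathcal{L}(T)$, $T|_{L'}$ is the tree on $L'$ obtained from the subtree of $T$ spanned by $L'$, rooted at $lca_T(L')$, by suppressing all non-root nodes of degree 2. Setting: $\mathcal{P}$ (proteins), $\mathcal{G}$ (genes), surjective $g:\mathcal{P}\to\mathcal{G}$; $G$ a gene tree on $\mathcal{G}$ whose internal nodes are labeled $Spec$ or $Dup$ (via LCA-reconciliation with a species tree); $P$ a protein tree on $\mathcal{P}$. Extend $g$ to internal nodes of $P$ by $g(x)=lca_G(\{g(x'):x'\in\mathcal{L}(P[x])\})$. The labeling $l_P$ of internal nodes of $P$: $l_P(x)=Creat$ if $g(x)=g(x_l)$ or $g(x)=g(x_r)$; otherwise $l_P(x)$ equals the label ($Spec$ or $Dup$) of $g(x)$ in $G$. A labeled protein tree is $P$ together with $l_P$. Two proteins $x,y$ are orthologs if $l_P(lca_P(\{x,y\}))\neq Creat$. A creation-free protein subtree of $P$ is $P|_{L'}$ for $L'\subseteq\mathcal{P}$ in which every pair of proteins are orthologs; it is inclusion-wise maximum if $L'$ is maximal under inclusion among such sets. Write $\mathbb{P}=\{P_1,\dots,P_k\}$ for the set of all such maximum subtrees. For $x\in\mathcal{P}$, $span(x)=\{P_i\in\mathbb{P}: x\in\mathcal{L}(P_i)\}$.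 The span partition $\mathbb{P}_{span}$ is the partition of $\mathcal{P}$ into classes of proteins having equal $span$; for a class $S_t$, $span(S_t)$ is the common value $span(x)$, $x\in S_t$. *)

theory Defs
  imports Main
begin

(* Rooted binary trees with labeled leaves.  A node of a tree is identified with
   the complete subtree rooted at it (leaves are labeled bijectively, see wf_tree). *)
datatype 'a tree = Leaf 'a | Node "'a tree" "'a tree"

datatype label = Spec | Dup | Creat

fun leaves :: "'a tree \<Rightarrow> 'a set" where
  "leaves (Leaf a) = {a}"
| "leaves (Node l r) = leaves l \<union> leaves r"

fun subtrees :: "'a tree \<Rightarrow> 'a tree set" where
  "subtrees (Leaf a) = {Leaf a}"
| "subtrees (Node l r) = insert (Node l r) (subtrees l \<union> subtrees r)"

fun is_node :: "'a tree \<Rightarrow> bool" where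
  "is_node (Leaf _) = False"
| "is_node (Node _ _) = True"

fun wf_tree :: "'a tree \<Rightarrow> bool" where
  "wf_tree (Leaf _) = True"
| "wf_tree (Node l r) = (wf_tree l \<and> wf_tree r \<and> leaves l \<inter> leaves r = {})"

definition lca :: "'a tree \<Rightarrow> 'a set \<Rightarrow> 'a tree" where
  "lca T X = (THE s. s \<in> subtrees T \<and> X \<subseteq> leaves s \<and>
       (\<forall>s'\<in>subtrees T. X \<subseteq> leaves s' \<longrightarrow> leaves s \<subseteq> leaves s'))"

(* restriction T|_L (None = empty tree); degree-2 nodes are suppressed *)
fun restr :: "'a set \<Rightarrow> 'a tree \<Rightarrow> 'a tree option" where
  "restr L (Leaf a) = (if a \<in> L then Some (Leaf a) else None)"
| "restr L (Node l r) = (case (restr L l, restr L r) of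
      (Some a, Some b) \<Rightarrow> Some (Node a b)
    | (Some a, None) \<Rightarrow> Some a
    | (None, b) \<Rightarrow> b)"

definition gmap :: "'g tree \<Rightarrow> ('p \<Rightarrow> 'g) \<Rightarrow> 'p tree \<Rightarrow> 'g tree" where
  "gmap G g x = lca G (g ` leaves x)"

(* labeling l_P of internal nodes of P; lab is the Spec/Dup labeling of G *)
fun node_label :: "'g tree \<Rightarrow> ('g tree \<Rightarrow> label) \<Rightarrow> ('p \<Rightarrow> 'g) \<Rightarrow> 'p tree \<Rightarrow> label" where
  "node_label G lab g (Leaf _) = undefined"
| "node_label G lab g (Node l r) =
     (if gmap G g (Node l r) = gmap G g l \<or> gmap G g (Node l r) = gmap G g r
      then Creat else lab (gmap G g (Node l r)))"

definition orth :: "'g tree \<Rightarrow> ('g tree \<Rightarrow> label) \<Rightarrow> ('p \<Rightarrow> 'g) \<Rightarrow> 'p tree \<Rightarrow> 'p \<Rightarrow> 'p \<Rightarrow> bool" where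
  "orth G lab g P x y = (node_label G lab g (lca P {x, y}) \<noteq> Creat)"

definition creation_free :: "'g tree \<Rightarrow> ('g tree \<Rightarrow> label) \<Rightarrow> ('p \<Rightarrow> 'g) \<Rightarrow> 'p tree \<Rightarrow> 'p set \<Rightarrow> bool" where
  "creation_free G lab g P L = (L \<noteq> {} \<and> L \<subseteq> leaves P \<and>
      (\<forall>x\<in>L. \<forall>y\<in>L. x \<noteq> y \<longrightarrow> orth G lab g P x y))"

definition max_cf :: "'g tree \<Rightarrow> ('g tree \<Rightarrow> label) \<Rightarrow> ('p \<Rightarrow> 'g) \<Rightarrow> 'p tree \<Rightarrow> 'p set \<Rightarrow> bool" where
  "max_cf G lab g P L = (creation_free G lab g P L \<and>
      (\<forall>L'. creation_free G lab g P L' \<longrightarrow> L \<subseteq> L' \<longrightarrow> L' = L))"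

definition max_subtrees :: "'g tree \<Rightarrow> ('g tree \<Rightarrow> label) \<Rightarrow> ('p \<Rightarrow> 'g) \<Rightarrow> 'p tree \<Rightarrow> 'p tree set" where
  "max_subtrees G lab g P = {the (restr L P) | L. max_cf G lab g P L}"

definition span :: "'g tree \<Rightarrow> ('g tree \<Rightarrow> label) \<Rightarrow> ('p \<Rightarrow> 'g) \<Rightarrow> 'p tree \<Rightarrow> 'p \<Rightarrow> 'p tree set" where
  "span G lab g P x = {Pi \<in> max_subtrees G lab g P. x \<in> leaves Pi}"

definition span_partition :: "'g tree \<Rightarrow> ('g tree \<Rightarrow> label) \<Rightarrow> ('p \<Rightarrow> 'g) \<Rightarrow> 'p tree \<Rightarrow> 'p set set" where
  "span_partition G lab g P =
     (\<lambda>x. {y \<in> leaves P. span G lab g P y = span G lab g P x}) ` leaves P"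

definition span_of :: "'g tree \<Rightarrow> ('g tree \<Rightarrow> label) \<Rightarrow> ('p \<Rightarrow> 'g) \<Rightarrow> 'p tree \<Rightarrow> 'p set \<Rightarrow> 'p tree set" where
  "span_of G lab g P S = span G lab g P (SOME x. x \<in> S)"

end

theory Submission
  imports Defs
begin

text \<open>Take a node \<open>x = Node a b\<close> labelled \<open>Creat\<close> that is minimal, i.e. has no \<open>Creat\<close>
  node strictly below it, and put \<open>A = leaves a\<close>, \<open>B = leaves b\<close>. Two proteins of \<open>A\<close> (or of
  \<open>B\<close>) have their lca strictly below \<open>x\<close>, so they are orthologs; a protein of \<open>A\<close> and one of
  \<open>B\<close> have lca \<open>x\<close>, so they are not; and a protein outside \<open>x\<close> has the same lca with every
  protein of \<open>A \<union> B\<close>. Consequently a maximum creation-free set meeting \<open>A\<close> contains all of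
  \<open>A\<close> and none of \<open>B\<close>, and exchanging \<open>A\<close> for \<open>B\<close> in it gives again a maximum
  creation-free set. This exchange is a bijection between the maximum sets containing \<open>A\<close>
  and those containing \<open>B\<close> which fixes everything outside \<open>A \<union> B\<close>; all four claims follow,
  and \<open>A\<close>, \<open>B\<close> are classes of the span partition.\<close>

lemma leaves_nonempty: "leaves t \<noteq> {}"
  by (induction t) auto

lemma finite_leaves: "finite (leaves t)"
  by (induction t) auto

lemma subtrees_refl: "t \<in> subtrees t"
  by (cases t) auto

lemma leaves_subtree: "s \<in> subtrees t \<Longrightarrow> leaves s \<subseteq> leaves t"
  by (induction t) auto

lemma subtrees_trans: "s \<in> subtrees t \<Longrightarrow> u \<in> subtrees s \<Longrightarrow> u \<in> subtrees t"
  by (induction t) auto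

lemma children_subtrees:
  "Node l r \<in> subtrees t \<Longrightarrow> l \<in> subtrees t \<and> r \<in> subtrees t"
  using subtrees_trans[of "Node l r" t] subtrees_refl[of l] subtrees_refl[of r] by auto

lemma wf_tree_subtree: "wf_tree t \<Longrightarrow> s \<in> subtrees t \<Longrightarrow> wf_tree s"
  by (induction t) auto

lemma subtree_eq_if_leaves_superset:
  "wf_tree t \<Longrightarrow> s \<in> subtrees t \<Longrightarrow> leaves t \<subseteq> leaves s \<Longrightarrow> s = t"
proof (induction t)
  case (Node l r)
  show ?case
  proof (rule ccontr)
    assume "s \<noteq> Node l r"
    then have "leaves s \<subseteq> leaves l \<or> leaves s \<subseteq> leaves r"
      using Node.prems leaves_subtree by auto
    then show False
      using Node.prems leaves_nonempty[of l] leaves_nonempty[of r] by auto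
  qed
qed auto

lemma subtrees_laminar:
  assumes "wf_tree t" "s1 \<in> subtrees t" "s2 \<in> subtrees t"
  shows "s1 \<in> subtrees s2 \<or> s2 \<in> subtrees s1 \<or> leaves s1 \<inter> leaves s2 = {}"
  using assms
proof (induction t)
  case (Node l r)
  show ?case
  proof (cases "s1 = Node l r \<or> s2 = Node l r")
    case False
    then have "s1 \<in> subtrees l \<or> s1 \<in> subtrees r" "s2 \<in> subtrees l \<or> s2 \<in> subtrees r"
      using Node.prems by auto
    moreover have "leaves s1 \<inter> leaves s2 = {}"
      if "s1 \<in> subtrees l \<and> s2 \<in> subtrees r \<or> s1 \<in> subtrees r \<and> s2 \<in> subtrees l"
      using that Node.prems(1) leaves_subtree[of s1] leaves_subtree[of s2] by fastforce
    ultimately show ?thesis using Node by auto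
  qed (use Node.prems in auto)
qed auto

lemma subtree_if_leaves_subset:
  assumes "wf_tree t" "s1 \<in> subtrees t" "s2 \<in> subtrees t" "leaves s1 \<subseteq> leaves s2"
  shows "s1 \<in> subtrees s2"
  using subtrees_laminar[OF assms(1-3)] subtree_eq_if_leaves_superset[of s1 s2]
    wf_tree_subtree[OF assms(1,2)] leaves_nonempty[of s1] subtrees_refl[of s1] assms(4)
  by blast

lemma subtree_eq_if_leaves_eq:
  "wf_tree t \<Longrightarrow> s1 \<in> subtrees t \<Longrightarrow> s2 \<in> subtrees t \<Longrightarrow> leaves s1 = leaves s2 \<Longrightarrow> s1 = s2"
  using subtree_if_leaves_subset[of t s1 s2] subtree_eq_if_leaves_superset[of s2 s1]
    wf_tree_subtree[of t s2] by auto

lemma leaves_subset_if_straddling: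
  assumes "wf_tree t" "x \<in> subtrees t" "s \<in> subtrees t"
    and "u \<in> leaves s" "u \<in> leaves x" "w \<in> leaves s" "w \<notin> leaves x"
  shows "leaves x \<subseteq> leaves s"
  using subtrees_laminar[OF assms(1,3,2)] leaves_subtree[of s x] leaves_subtree[of x s] assms(4-7)
  by blast

lemma subtree_minimal_exists:
  "\<exists>x\<in>subtrees t. Q x \<Longrightarrow> \<exists>x\<in>subtrees t. Q x \<and> (\<forall>y\<in>subtrees x. y \<noteq> x \<longrightarrow> \<not> Q y)"
proof (induction t)
  case (Node l r)
  show ?case
  proof (cases "(\<exists>x\<in>subtrees l. Q x) \<or> (\<exists>x\<in>subtrees r. Q x)")
    case True
    then show ?thesis using Node.IH by auto
  next
    case False
    then show ?thesis using Node.prems by auto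
  qed
qed auto

subsection \<open>Lowest common ancestors\<close>

definition is_lca :: "'a tree \<Rightarrow> 'a set \<Rightarrow> 'a tree \<Rightarrow> bool" where
  "is_lca T X s \<longleftrightarrow> s \<in> subtrees T \<and> X \<subseteq> leaves s \<and>
     (\<forall>s'\<in>subtrees T. X \<subseteq> leaves s' \<longrightarrow> leaves s \<subseteq> leaves s')"

lemma lca_eqI: "wf_tree T \<Longrightarrow> is_lca T X s \<Longrightarrow> lca T X = s"
  unfolding lca_def
  by (rule the_equality) (simp add: is_lca_def, metis is_lca_def subtree_eq_if_leaves_eq subset_antisym)

lemma is_lca_exists:
  "wf_tree T \<Longrightarrow> s \<in> subtrees T \<Longrightarrow> X \<subseteq> leaves s \<Longrightarrow> X \<noteq> {} \<Longrightarrow> \<exists>s0. is_lca T X s0"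
proof (induction s)
  case (Leaf a)
  have "leaves (Leaf a) \<subseteq> leaves s'" if "s' \<in> subtrees T" "X \<subseteq> leaves s'" for s'
    using subtrees_laminar[OF Leaf(1) that(1) Leaf(2)] leaves_subtree[of "Leaf a" s'] that(2)
      Leaf(3,4) by auto
  then show ?case using Leaf unfolding is_lca_def by blast
next
  case (Node l r)
  show ?case
  proof (cases "X \<subseteq> leaves l \<or> X \<subseteq> leaves r")
    case True
    then show ?thesis using Node children_subtrees by blast
  next
    case False
    have "leaves (Node l r) \<subseteq> leaves s'" if "s' \<in> subtrees T" "X \<subseteq> leaves s'" for s'
    proof -
      have "s' \<notin> subtrees l" "s' \<notin> subtrees r"
        using False that(2) leaves_subtree[of s'] by blast+
      moreover have "leaves s' \<inter> leaves (Node l r) \<noteq> {}"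
        using False that(2) Node.prems(3) by blast
      ultimately show ?thesis
        using subtrees_laminar[OF Node.prems(1) that(1) Node.prems(2)]
          leaves_subtree[of "Node l r" s'] by auto
    qed
    then show ?thesis using Node.prems unfolding is_lca_def by blast
  qed
qed

lemma is_lca_lca: "wf_tree T \<Longrightarrow> X \<subseteq> leaves T \<Longrightarrow> X \<noteq> {} \<Longrightarrow> is_lca T X (lca T X)"
  using is_lca_exists[OF _ subtrees_refl] lca_eqI by metis

lemma lca_leaves: "wf_tree T \<Longrightarrow> s \<in> subtrees T \<Longrightarrow> lca T (leaves s) = s"
  by (rule lca_eqI) (auto simp: is_lca_def)

lemma lca_pair_across:
  assumes wf: "wf_tree T" and x: "Node a b \<in> subtrees T"
    and u: "u \<in> leaves a" and v: "v \<in> leaves b"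
  shows "lca T {u, v} = Node a b"
proof (rule lca_eqI[OF wf])
  have disj: "leaves a \<inter> leaves b = {}" using wf_tree_subtree[OF wf x] by simp
  have "leaves a \<subseteq> leaves s'" "leaves b \<subseteq> leaves s'"
    if "s' \<in> subtrees T" "{u, v} \<subseteq> leaves s'" for s'
    using leaves_subset_if_straddling[OF wf _ that(1)] children_subtrees[OF x] that(2) u v disj
    by blast+
  then show "is_lca T {u, v} (Node a b)"
    unfolding is_lca_def using x u v by auto
qed

lemma lca_pair_inside:
  assumes wf: "wf_tree T" and c: "c \<in> subtrees T"
    and "u \<in> leaves c" "v \<in> leaves c" "u \<noteq> v"
  shows "lca T {u, v} \<in> subtrees c \<and> is_node (lca T {u, v})"
proof -
  have "is_lca T {u, v} (lca T {u, v})"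
    by (rule is_lca_lca[OF wf]) (use leaves_subtree[OF c] assms(3,4) in auto)
  then have s: "lca T {u, v} \<in> subtrees T" "{u, v} \<subseteq> leaves (lca T {u, v})"
    "leaves (lca T {u, v}) \<subseteq> leaves c"
    unfolding is_lca_def using c assms(3,4) by auto
  have "is_node (lca T {u, v})"
    using s(2) \<open>u \<noteq> v\<close> by (cases "lca T {u, v}") auto
  then show ?thesis using subtree_if_leaves_subset[OF wf s(1) c s(3)] by blast
qed

lemma lca_pair_outside:
  assumes wf: "wf_tree T" and x: "x \<in> subtrees T"
    and u: "u \<in> leaves x" and u': "u' \<in> leaves x" and w: "w \<in> leaves T" "w \<notin> leaves x"
  shows "lca T {u, w} = lca T {u', w}"
proof -
  have straddle: "{u, u', w} \<subseteq> leaves s'" if "s' \<in> subtrees T" "v \<in> {u, u'}" "{v, w} \<subseteq> leaves s'"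
    for s' v
    using leaves_subset_if_straddling[OF wf x that(1)] that u u' w(2) by blast
  define s where "s = lca T {u, w}"
  have s: "is_lca T {u, w} s"
    unfolding s_def by (rule is_lca_lca[OF wf]) (use leaves_subtree[OF x] u w(1) in auto)
  have "is_lca T {u', w} s"
    unfolding is_lca_def
  proof (intro conjI ballI impI)
    show "s \<in> subtrees T" "{u', w} \<subseteq> leaves s"
      using s straddle[of s u] unfolding is_lca_def by auto
    show "leaves s \<subseteq> leaves s'" if "s' \<in> subtrees T" "{u', w} \<subseteq> leaves s'" for s'
      using s straddle[OF that(1) _ that(2)] that(1) unfolding is_lca_def by auto
  qed
  then show ?thesis using lca_eqI[OF wf] s_def by metis
qed

subsection \<open>Restrictions\<close>

lemma restr_eq_None_iff: "restr L T = None \<longleftrightarrow> L \<inter> leaves T = {}"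
  by (induction T) (auto split: option.splits)

lemma leaves_restr: "restr L T = Some t \<Longrightarrow> leaves t = L \<inter> leaves T"
  by (induction T arbitrary: t) (auto split: option.splits if_splits simp: restr_eq_None_iff)

lemma restr_restr: "restr L T = Some t \<Longrightarrow> restr S t = restr (S \<inter> L) T"
proof (induction T arbitrary: t)
  case (Node l r)
  show ?case
  proof (cases "restr L l")
    case None
    then have "restr (S \<inter> L) l = None" using restr_eq_None_iff by blast
    then show ?thesis using Node None by (auto split: option.splits)
  next
    case (Some a)
    show ?thesis
    proof (cases "restr L r")
      case None
      then have "restr (S \<inter> L) r = None" using restr_eq_None_iff by blast
      then show ?thesis using Node Some None by (auto split: option.splits)
    next
      case (Some b)
      then show ?thesis using Node \<open>restr L l = Some a\<close> by (auto split: option.splits)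
    qed
  qed
qed (auto split: if_splits)

subsection \<open>Maximum creation-free sets and spans\<close>

lemma orth_sym: "orth G lab g P x y = orth G lab g P y x"
  by (simp add: orth_def insert_commute)

lemma max_cf_exists:
  assumes "y \<in> leaves P" shows "\<exists>L. max_cf G lab g P L \<and> y \<in> L"
proof -
  let ?F = "{L. creation_free G lab g P L \<and> y \<in> L}"
  have fin: "finite ?F"
    by (rule finite_subset[of _ "Pow (leaves P)"]) (auto simp: creation_free_def finite_leaves)
  have "{y} \<in> ?F" using assms by (auto simp: creation_free_def)
  then obtain m where m: "m \<in> ?F" "\<And>L. L \<in> ?F \<Longrightarrow> m \<subseteq> L \<Longrightarrow> m = L"
    using finite_has_maximal[OF fin] by blast
  have "max_cf G lab g P m"
    unfolding max_cf_def
  proof (intro conjI allI impI)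
    show "creation_free G lab g P m" using m(1) by blast
    show "L' = m" if "creation_free G lab g P L'" "m \<subseteq> L'" for L'
      using m that by blast
  qed
  then show ?thesis using m(1) by blast
qed

lemma max_cf_restr:
  assumes "max_cf G lab g P L"
  shows "restr L P = Some (the (restr L P))" "leaves (the (restr L P)) = L"
proof -
  have "creation_free G lab g P L" using assms unfolding max_cf_def by blast
  then have L: "L \<noteq> {}" "L \<subseteq> leaves P" unfolding creation_free_def by blast+
  then show restr: "restr L P = Some (the (restr L P))"
    using restr_eq_None_iff[of L P] by auto
  show "leaves (the (restr L P)) = L" using leaves_restr[OF restr] L by blast
qed

lemma span_eq: "span G lab g P y = {the (restr L P) | L. max_cf G lab g P L \<and> y \<in> L}"
proof -
  have "y \<in> leaves (the (restr L P)) \<longleftrightarrow> y \<in> L" if "max_cf G lab g P L" for L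
    using max_cf_restr(2)[OF that] by simp
  then show ?thesis unfolding span_def max_subtrees_def by blast
qed

lemma mem_max_cf_if_span_eq:
  assumes max: "max_cf G lab g P L" and "u \<in> L" "span G lab g P u = span G lab g P v"
  shows "v \<in> L"
proof -
  have "the (restr L P) \<in> span G lab g P u" unfolding span_eq using assms(1,2) by blast
  then have "v \<in> leaves (the (restr L P))" using assms(3) unfolding span_def by blast
  then show ?thesis using max_cf_restr(2)[OF max] by simp
qed

subsection \<open>Creation siblings\<close>

text \<open>The sets \<open>S\<^sub>u\<close>, \<open>S\<^sub>v\<close> of the theorem: the leaf sets of the two children of a minimal
  \<open>Creat\<close> node.\<close>

locale creation_siblings =
  fixes G :: "'g tree" and lab :: "'g tree \<Rightarrow> label" and g :: "'p \<Rightarrow> 'g" and P :: "'p tree"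
    and A B :: "'p set"
  assumes A_leaves: "A \<subseteq> leaves P" and B_leaves: "B \<subseteq> leaves P" and disjoint: "A \<inter> B = {}"
    and A_nonempty: "A \<noteq> {}" and B_nonempty: "B \<noteq> {}"
    and not_orth_across: "\<And>u v. u \<in> A \<Longrightarrow> v \<in> B \<Longrightarrow> \<not> orth G lab g P u v"
    and orth_A: "\<And>u u'. u \<in> A \<Longrightarrow> u' \<in> A \<Longrightarrow> u \<noteq> u' \<Longrightarrow> orth G lab g P u u'"
    and orth_B: "\<And>u u'. u \<in> B \<Longrightarrow> u' \<in> B \<Longrightarrow> u \<noteq> u' \<Longrightarrow> orth G lab g P u u'"
    and orth_outside: "\<And>u u' w. u \<in> A \<union> B \<Longrightarrow> u' \<in> A \<union> B \<Longrightarrow> w \<in> leaves P \<Longrightarrow>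
       w \<notin> A \<union> B \<Longrightarrow> orth G lab g P u w = orth G lab g P u' w"

lemma creation_siblings_swap:
  assumes "creation_siblings G lab g P A B" shows "creation_siblings G lab g P B A"
proof -
  interpret creation_siblings G lab g P A B by (fact assms)
  show ?thesis
  proof
    show "\<not> orth G lab g P u v" if "u \<in> B" "v \<in> A" for u v
      using not_orth_across[OF that(2,1)] orth_sym by metis
    show "orth G lab g P u w = orth G lab g P u' w"
      if "u \<in> B \<union> A" "u' \<in> B \<union> A" "w \<in> leaves P" "w \<notin> B \<union> A" for u u' w
      using orth_outside[of u u' w] that by blast
  qed (use A_leaves B_leaves disjoint A_nonempty B_nonempty orth_A orth_B in blast)+
qed

context creation_siblings
begin

lemma creation_free_disjoint_B:
  assumes "creation_free G lab g P L" "L \<inter> A \<noteq> {}" shows "L \<inter> B = {}"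
proof (rule ccontr)
  assume "L \<inter> B \<noteq> {}"
  then obtain u v where "u \<in> L \<inter> A" "v \<in> L \<inter> B" using assms(2) by blast
  moreover have "u \<noteq> v" using calculation disjoint by blast
  ultimately show False
    using assms(1) not_orth_across unfolding creation_free_def by blast
qed

text \<open>Both the completion \<open>L \<union> A\<close> and the exchange \<open>(L - A) \<union> B\<close>: members of \<open>C\<close> are
  orthologous to \<open>L - A\<close> because some protein of \<open>A\<close> is, and proteins outside \<open>A \<union> B\<close>
  cannot tell \<open>A\<close> from \<open>B\<close>.\<close>

lemma creation_free_replace:
  assumes cf: "creation_free G lab g P L" and meets: "L \<inter> A \<noteq> {}" and C: "C = A \<or> C = B"
  shows "creation_free G lab g P ((L - A) \<union> C)"
proof -
  obtain a0 where a0: "a0 \<in> L" "a0 \<in> A" using meets by blast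
  have LB: "L \<inter> B = {}" using creation_free_disjoint_B[OF cf meets] .
  have L: "L \<subseteq> leaves P" "\<And>x y. x \<in> L \<Longrightarrow> y \<in> L \<Longrightarrow> x \<noteq> y \<Longrightarrow> orth G lab g P x y"
    using cf unfolding creation_free_def by auto
  have C_rest: "orth G lab g P x y" if "x \<in> C" "y \<in> L - A" for x y
  proof -
    have "orth G lab g P x y = orth G lab g P a0 y"
      using orth_outside[of x a0 y] that C a0 L(1) LB by blast
    then show ?thesis using L(2)[of a0 y] a0 that by auto
  qed
  have C_C: "orth G lab g P x y" if "x \<in> C" "y \<in> C" "x \<noteq> y" for x y
    using C orth_A orth_B that by blast
  show ?thesis
    unfolding creation_free_def
  proof (intro conjI ballI impI)
    show "L - A \<union> C \<noteq> {}" "L - A \<union> C \<subseteq> leaves P"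
      using C L(1) A_leaves B_leaves A_nonempty B_nonempty by auto
    show "orth G lab g P x y" if "x \<in> L - A \<union> C" "y \<in> L - A \<union> C" "x \<noteq> y" for x y
      using that L(2) C_rest C_C orth_sym[of G lab g P x y] by blast
  qed
qed

lemma max_cf_contains_A:
  assumes "max_cf G lab g P L" "L \<inter> A \<noteq> {}" shows "A \<subseteq> L"
proof -
  have "creation_free G lab g P (L - A \<union> A)"
    using creation_free_replace assms unfolding max_cf_def by blast
  then have "L - A \<union> A = L" using assms(1) unfolding max_cf_def by blast
  then show ?thesis by blast
qed

lemma max_cf_disjoint_B: "max_cf G lab g P L \<Longrightarrow> A \<subseteq> L \<Longrightarrow> L \<inter> B = {}"
  using creation_free_disjoint_B A_nonempty unfolding max_cf_def by blast

lemma max_cf_exchange: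
  assumes max: "max_cf G lab g P L" and AL: "A \<subseteq> L"
  shows "max_cf G lab g P ((L - A) \<union> B)"
proof -
  interpret swapped: creation_siblings G lab g P B A
    by (rule creation_siblings_swap) unfold_locales
  have cf: "creation_free G lab g P L" using max max_cf_def by blast
  have LB: "L \<inter> B = {}" using max_cf_disjoint_B[OF max AL] .
  show ?thesis
    unfolding max_cf_def
  proof (intro conjI allI impI)
    show "creation_free G lab g P (L - A \<union> B)"
      using creation_free_replace[OF cf] AL A_nonempty by blast
    fix L' assume cf': "creation_free G lab g P L'" and sub: "L - A \<union> B \<subseteq> L'"
    have L'A: "L' \<inter> A = {}"
      using swapped.creation_free_disjoint_B[OF cf'] sub B_nonempty by blast
    have "creation_free G lab g P ((L' - B) \<union> A)"
      using swapped.creation_free_replace[OF cf'] sub B_nonempty by blast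
    moreover have "L \<subseteq> (L' - B) \<union> A" using sub LB by blast
    ultimately have "(L' - B) \<union> A = L" using max unfolding max_cf_def by blast
    then show "L' = L - A \<union> B" using sub L'A disjoint by blast
  qed
qed

lemma span_member_A:
  assumes "y \<in> A"
  shows "span G lab g P y = {the (restr L P) | L. max_cf G lab g P L \<and> A \<subseteq> L}"
proof -
  have "max_cf G lab g P L \<and> y \<in> L \<longleftrightarrow> max_cf G lab g P L \<and> A \<subseteq> L" for L
    using max_cf_contains_A[of L] assms by blast
  then show ?thesis unfolding span_eq by simp
qed

lemma span_class_A:
  assumes y: "y \<in> A" shows "{w \<in> leaves P. span G lab g P w = span G lab g P y} = A"
proof (intro equalityI subsetI)
  fix w assume "w \<in> A"
  then show "w \<in> {w \<in> leaves P. span G lab g P w = span G lab g P y}"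
    using span_member_A[of w] span_member_A[OF y] A_leaves by auto
next
  fix w assume "w \<in> {w \<in> leaves P. span G lab g P w = span G lab g P y}"
  then have w: "w \<in> leaves P" "span G lab g P w = span G lab g P y" by auto
  show "w \<in> A"
  proof (rule ccontr)
    assume "w \<notin> A"
    obtain L where L: "max_cf G lab g P L" "y \<in> L"
      using max_cf_exists y A_leaves by (meson subsetD)
    have AL: "A \<subseteq> L" using max_cf_contains_A[OF L(1)] L(2) y by blast
    have "w \<in> L" using mem_max_cf_if_span_eq[OF L] w(2) by simp
    then have "w \<in> L - A \<union> B" using \<open>w \<notin> A\<close> by blast
    then have "y \<in> L - A \<union> B" using mem_max_cf_if_span_eq[OF max_cf_exchange[OF L(1) AL]] w(2) by simp
    then show False using y disjoint by blast
  qed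
qed

lemma A_in_span_partition: "A \<in> span_partition G lab g P"
  using span_class_A A_nonempty A_leaves unfolding span_partition_def by blast

lemma span_of_A: "span_of G lab g P A = {the (restr L P) | L. max_cf G lab g P L \<and> A \<subseteq> L}"
  unfolding span_of_def using span_member_A someI_ex[of "\<lambda>x. x \<in> A"] A_nonempty by blast

lemma restr_A_span_of:
  assumes "Pi \<in> span_of G lab g P A" shows "restr A P = restr A Pi"
proof -
  obtain L where L: "max_cf G lab g P L" "A \<subseteq> L" "Pi = the (restr L P)"
    using assms span_of_A by blast
  then show ?thesis using restr_restr[OF max_cf_restr(1)[OF L(1)]] by (simp add: Int_absorb2)
qed

lemma restr_complement_span_of:
  "(\<lambda>Pi. restr (leaves Pi - A) Pi) ` span_of G lab g P A
   = {restr (L - A) P | L. max_cf G lab g P L \<and> A \<subseteq> L}"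
proof -
  have "restr (leaves (the (restr L P)) - A) (the (restr L P)) = restr (L - A) P"
    if "max_cf G lab g P L" for L
    using restr_restr[OF max_cf_restr(1)[OF that]] max_cf_restr(2)[OF that]
    by (simp add: Int_absorb2 Diff_subset)
  then show ?thesis unfolding span_of_A by (auto simp: image_def)
qed

lemma restr_complements_subset:
  "{restr (L - A) P | L. max_cf G lab g P L \<and> A \<subseteq> L}
   \<subseteq> {restr (L - B) P | L. max_cf G lab g P L \<and> B \<subseteq> L}"
proof (intro subsetI, elim CollectE exE conjE)
  fix t L assume t: "t = restr (L - A) P" and L: "max_cf G lab g P L" "A \<subseteq> L"
  have "(L - A \<union> B) - B = L - A" using max_cf_disjoint_B[OF L] disjoint by blast
  then show "t \<in> {restr (L - B) P | L. max_cf G lab g P L \<and> B \<subseteq> L}"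
    using t max_cf_exchange[OF L] by (metis (mono_tags, lifting) Un_upper2 mem_Collect_eq)
qed

lemma span_of_disjoint: "span_of G lab g P A \<inter> span_of G lab g P B = {}"
proof (rule equals0I)
  interpret swapped: creation_siblings G lab g P B A
    by (rule creation_siblings_swap) unfold_locales
  fix Pi assume "Pi \<in> span_of G lab g P A \<inter> span_of G lab g P B"
  then obtain L L' where L: "max_cf G lab g P L" "A \<subseteq> L" "Pi = the (restr L P)"
    and L': "max_cf G lab g P L'" "B \<subseteq> L'" "Pi = the (restr L' P)"
    using span_of_A swapped.span_of_A by blast
  have "L = L'" using max_cf_restr(2)[OF L(1)] max_cf_restr(2)[OF L'(1)] L(3) L'(3) by simp
  then show False using max_cf_disjoint_B[OF L(1,2)] L'(2) B_nonempty by blast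
qed

end

lemma creation_siblings_minimal_Creat:
  assumes wf: "wf_tree P" and x: "Node a b \<in> subtrees P"
    and creat: "node_label G lab g (Node a b) = Creat"
    and minimal: "\<forall>y\<in>subtrees (Node a b). y \<noteq> Node a b \<longrightarrow>
                    \<not> (is_node y \<and> node_label G lab g y = Creat)"
  shows "creation_siblings G lab g P (leaves a) (leaves b)"
proof -
  have disj: "leaves a \<inter> leaves b = {}" using wf_tree_subtree[OF wf x] by simp
  have ab: "a \<in> subtrees P" "b \<in> subtrees P" using children_subtrees[OF x] by auto
  have orth_child: "orth G lab g P u u'"
    if c: "c = a \<or> c = b" and u: "u \<in> leaves c" "u' \<in> leaves c" "u \<noteq> u'" for c u u'
  proof -
    have "c \<in> subtrees P" using c ab by blast
    then have below: "lca P {u, u'} \<in> subtrees c" "is_node (lca P {u, u'})"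
      using lca_pair_inside[OF wf _ u] by blast+
    have "\<not> leaves (Node a b) \<subseteq> leaves c"
      using c disj leaves_nonempty[of a] leaves_nonempty[of b] by auto
    then have "lca P {u, u'} \<noteq> Node a b"
      using leaves_subtree[OF below(1)] by auto
    moreover have "lca P {u, u'} \<in> subtrees (Node a b)"
      using below(1) c by auto
    ultimately show ?thesis
      unfolding orth_def using minimal below(2) by blast
  qed
  show ?thesis
  proof
    show "leaves a \<subseteq> leaves P" "leaves b \<subseteq> leaves P" using ab leaves_subtree by blast+
    show "leaves a \<inter> leaves b = {}" "leaves a \<noteq> {}" "leaves b \<noteq> {}"
      using disj leaves_nonempty by blast+
    show "orth G lab g P u u'" if "u \<in> leaves a" "u' \<in> leaves a" "u \<noteq> u'" for u u'
      using orth_child[of a] that by blast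
    show "orth G lab g P u u'" if "u \<in> leaves b" "u' \<in> leaves b" "u \<noteq> u'" for u u'
      using orth_child[of b] that by blast
    show "\<not> orth G lab g P u v" if "u \<in> leaves a" "v \<in> leaves b" for u v
      unfolding orth_def using lca_pair_across[OF wf x that] creat by simp
    show "orth G lab g P u w = orth G lab g P u' w"
      if "u \<in> leaves a \<union> leaves b" "u' \<in> leaves a \<union> leaves b" "w \<in> leaves P"
        "w \<notin> leaves a \<union> leaves b" for u u' w
    proof -
      have "u \<in> leaves (Node a b)" "u' \<in> leaves (Node a b)" "w \<notin> leaves (Node a b)"
        using that by auto
      then show ?thesis unfolding orth_def using lca_pair_outside[OF wf x _ _ that(3)] by metis
    qed
  qed
qed

theorem lemma1:
  fixes P :: "'p tree" and G :: "'g tree" and g :: "'p \<Rightarrow> 'g"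
    and lab :: "'g tree \<Rightarrow> label"
  assumes "wf_tree P" and "wf_tree G" and "g ` leaves P = leaves G"
    and "\<forall>x\<in>subtrees G. is_node x \<longrightarrow> lab x \<in> {Spec, Dup}"
    and "\<exists>x\<in>subtrees P. is_node x \<and> node_label G lab g x = Creat"
  shows "\<exists>Su\<in>span_partition G lab g P. \<exists>Sv\<in>span_partition G lab g P.
     Su \<noteq> Sv
   \<and> (\<exists>s\<in>subtrees P. leaves s = Su)
   \<and> (\<exists>s\<in>subtrees P. leaves s = Sv)
   \<and> (\<exists>s\<in>subtrees P. leaves s = Su \<union> Sv)
   \<and> node_label G lab g (lca P (Su \<union> Sv)) = Creat
   \<and> (\<forall>S\<in>{Su, Sv}. \<forall>Pi\<in>span_of G lab g P S. restr S P = restr S Pi)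
   \<and> span_of G lab g P Su \<inter> span_of G lab g P Sv = {}
   \<and> (\<lambda>Pi. restr (leaves Pi - Su) Pi) ` span_of G lab g P Su
     = (\<lambda>Pi. restr (leaves Pi - Sv) Pi) ` span_of G lab g P Sv"
proof -
  obtain a b where x: "Node a b \<in> subtrees P" and creat: "node_label G lab g (Node a b) = Creat"
    and minimal: "\<forall>y\<in>subtrees (Node a b). y \<noteq> Node a b \<longrightarrow>
                    \<not> (is_node y \<and> node_label G lab g y = Creat)"
    using subtree_minimal_exists[OF assms(5)] by (metis is_node.elims(2))
  interpret ab: creation_siblings G lab g P "leaves a" "leaves b"
    using creation_siblings_minimal_Creat[OF assms(1) x creat minimal] .
  interpret ba: creation_siblings G lab g P "leaves b" "leaves a"
    by (rule creation_siblings_swap) unfold_locales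
  have Creat_lca: "node_label G lab g (lca P (leaves a \<union> leaves b)) = Creat"
    using lca_leaves[OF assms(1) x] creat by simp
  have images: "(\<lambda>Pi. restr (leaves Pi - leaves a) Pi) ` span_of G lab g P (leaves a)
     = (\<lambda>Pi. restr (leaves Pi - leaves b) Pi) ` span_of G lab g P (leaves b)"
    unfolding ab.restr_complement_span_of ba.restr_complement_span_of
    using ab.restr_complements_subset ba.restr_complements_subset by blast
  show ?thesis
  proof (rule bexI[of _ "leaves a"], rule bexI[of _ "leaves b"], intro conjI)
    show "leaves a \<noteq> leaves b" using ab.disjoint ab.A_nonempty by blast
    show "\<exists>s\<in>subtrees P. leaves s = leaves a \<union> leaves b"
      using x by (intro bexI[of _ "Node a b"]) auto
  qed (use ab.A_in_span_partition ba.A_in_span_partition children_subtrees[OF x] Creat_lca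
      ab.restr_A_span_of ba.restr_A_span_of ab.span_of_disjoint images in blast)+
qed

end
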